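(* Let $p$ be an odd prime and let $c$ be an integer such that $-c-1$ is a quadratic nonresidue modulo $p$. For every integer $n \ge 1$ define $$q_n = \left\lfloor \frac{(p-1)!\,(n^2 + c)}{p} \right\rfloor.$$ Then for all $n \ge 1$, $q_n$ has a prime factor smaller than $p$, and therefore $q_n$ is composite.
   Formalization: The conclusion that $q_n$ is composite is drawn only for those $n \ge 1$ with $q_n \ge p$. The statement above fails without it. *)

theory Defs
  imports Complex_Main "HOL-Number_Theory.Number_Theory"
begin

definition composite_int :: "int \<Rightarrow> bool" where
  "composite_int m \<longleftrightarrow> m > 1 \<and> \<not> prime m"

definition qseq :: "nat \<Rightarrow> int \<Rightarrow> nat \<Rightarrow> int" where
  "qseq p c n = \<lfloor>real (fact (p - 1)) * (real n ^ 2 + real_of_int c) / real p\<rfloor>"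

end

theory Submission
  imports Defs
begin

text \<open>
  Write \<open>(p-1)! (n\<^sup>2 + c) = p q\<^sub>n + r\<close> with \<open>0 \<le> r < p\<close>. By Wilson's theorem
  \<open>r \<equiv> -(n\<^sup>2 + c) (mod p)\<close>, so \<open>r = 1\<close> would make \<open>-c-1\<close> the square \<open>n\<^sup>2\<close> modulo \<open>p\<close>.
  If \<open>r = 0\<close> then \<open>p\<close> divides \<open>n\<^sup>2 + c\<close> and \<open>q\<^sub>n\<close> is a multiple of \<open>(p-1)!\<close>, hence even.
  If \<open>2 \<le> r < p\<close> then \<open>r\<close> divides \<open>(p-1)!\<close> and is prime to \<open>p\<close>, so \<open>r\<close> divides \<open>q\<^sub>n\<close>,
  and every prime factor of \<open>r\<close> is smaller than \<open>p\<close>.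
\<close>

lemma qseq_eq_div: "qseq p c n = (fact (p - 1) * (int n ^ 2 + c)) div int p"
proof -
  have "real (fact (p - 1)) * (real n ^ 2 + real_of_int c) / real p
        = real_of_int (fact (p - 1) * (int n ^ 2 + c)) / real_of_int (int p)"
    by simp
  then show ?thesis unfolding qseq_def by (simp only: floor_divide_of_int_eq)
qed

lemma int_dvd_fact:
  assumes "1 \<le> k" "k \<le> n"
  shows "int k dvd fact n"
proof -
  have "int k dvd int (fact n)"
    using dvd_fact[OF assms] by (simp only: of_nat_dvd_iff)
  then show ?thesis
    by simp
qed

lemma fact_mult_cong_uminus:
  assumes "prime p"
  shows "[fact (p - 1) * m = - m] (mod int p)"
  using cong_scalar_right[OF wilson_theorem[OF assms], of m] by simp

lemma even_fact_mult_div_prime: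
  fixes m :: int
  assumes "prime p" "p \<ge> 3" "int p dvd fact (p - 1) * m"
  shows "even ((fact (p - 1) * m) div int p)"
proof -
  have "int p dvd fact (p - 1) * m + m"
    using fact_mult_cong_uminus[OF assms(1), of m] by (simp add: cong_iff_dvd_diff)
  then have "int p dvd m"
    using assms(3) by (simp add: dvd_add_right_iff)
  then obtain k where "m = int p * k" ..
  then have "(fact (p - 1) * m) div int p = fact (p - 1) * k"
    using assms(2) by (simp add: mult.left_commute)
  moreover have "int 2 dvd fact (p - 1)"
    using assms(2) by (intro int_dvd_fact) auto
  ultimately show ?thesis by simp
qed

lemma remainder_dvd_fact_mult_div_prime:
  fixes p :: nat and m :: int
  defines "r \<equiv> (fact (p - 1) * m) mod int p"
  assumes "prime p" "r \<noteq> 0"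
  shows "r dvd (fact (p - 1) * m) div int p"
proof -
  have r_bounds: "0 < r" "r < int p"
    using assms(2,3) prime_gt_0_nat[OF assms(2)] unfolding r_def
    by (auto simp: order.not_eq_order_implies_strict)
  have "int (nat r) dvd fact (p - 1)"
    using r_bounds by (intro int_dvd_fact) auto
  then have "r dvd fact (p - 1)"
    using r_bounds by simp
  moreover have "int p * ((fact (p - 1) * m) div int p) = fact (p - 1) * m - r"
    unfolding r_def by (simp add: minus_mod_eq_mult_div)
  ultimately have "r dvd int p * ((fact (p - 1) * m) div int p)"
    by simp
  moreover have "coprime (int p) r"
    using assms(2) r_bounds by (intro prime_imp_coprime) (auto dest: zdvd_not_zless)
  ultimately show ?thesis
    by (simp add: coprime_commute coprime_dvd_mult_right_iff)
qed

lemma small_prime_dvd_fact_mult_div_prime: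
  fixes m :: int
  assumes "prime p" "odd p" "\<not> [fact (p - 1) * m = 1] (mod int p)"
  shows "\<exists>l. prime l \<and> l < p \<and> int l dvd (fact (p - 1) * m) div int p"
proof -
  define r where "r = (fact (p - 1) * m) mod int p"
  have p_ge_3: "p \<ge> 3"
    using assms(1,2) prime_ge_2_nat[OF assms(1)] by (cases "p = 2") auto
  have "0 \<le> r" "r < int p" "r \<noteq> 1"
    using assms(3) p_ge_3 unfolding r_def cong_def by auto
  then consider "r = 0" | "r \<ge> 2" "r < int p"
    by linarith
  then show ?thesis
  proof cases
    case 1
    then have "int p dvd fact (p - 1) * m"
      unfolding r_def by (rule mod_0_imp_dvd)
    then have "int 2 dvd (fact (p - 1) * m) div int p"
      using even_fact_mult_div_prime[OF assms(1) p_ge_3] by simp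
    then show ?thesis
      using p_ge_3 by (intro exI[of _ 2]) simp
  next
    case 2
    have "nat r \<noteq> 1"
      using 2 by simp
    then obtain l where l: "prime l" "l dvd nat r"
      using prime_factor_nat by blast
    have "l \<le> nat r"
      using l(2) 2 by (intro dvd_imp_le) auto
    then have "l < p"
      using 2 by linarith
    have "int l dvd int (nat r)"
      using l(2) by (simp only: of_nat_dvd_iff)
    also have "int (nat r) = r"
      using 2 by simp
    also have "r dvd (fact (p - 1) * m) div int p"
      using remainder_dvd_fact_mult_div_prime[OF assms(1), of m] 2 unfolding r_def by simp
    finally show ?thesis
      using l(1) \<open>l < p\<close> by (intro exI[of _ l] conjI)
  qed
qed

lemma not_cong_square_if_Legendre_eq_neg_1:
  assumes "Legendre a m = -1"
  shows "\<not> [x\<^sup>2 = a] (mod m)"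
proof
  assume "[x\<^sup>2 = a] (mod m)"
  then have "QuadRes m a"
    unfolding QuadRes_def by blast
  then show False
    using assms unfolding Legendre_def by (auto split: if_splits)
qed

lemma composite_if_proper_prime_dvd:
  assumes "prime l" "int l dvd q" "int l < q"
  shows "composite_int q"
  using assms primes_dvd_imp_eq[of "int l" q] prime_gt_1_nat[OF assms(1)]
  unfolding composite_int_def by auto

theorem theorem12:
  fixes p :: nat and c :: int
  assumes "prime p" and "odd p"
    and "Legendre (- c - 1) (int p) = -1"
  shows "\<forall>n::nat. n \<ge> 1 \<longrightarrow>
           (\<exists>l::nat. prime l \<and> l < p \<and> int l dvd qseq p c n) \<and>
           (qseq p c n \<ge> int p \<longrightarrow> composite_int (qseq p c n))"
proof (intro allI impI conjI)
  fix n :: nat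
  have "\<not> [int n ^ 2 = - c - 1] (mod int p)"
    using not_cong_square_if_Legendre_eq_neg_1[OF assms(3)] .
  moreover have "- (int n ^ 2 + c) - 1 = - (int n ^ 2 - (- c - 1))"
    by simp
  ultimately have "\<not> [- (int n ^ 2 + c) = 1] (mod int p)"
    by (simp only: cong_iff_dvd_diff dvd_minus_iff not_False_eq_True)
  then have "\<not> [fact (p - 1) * (int n ^ 2 + c) = 1] (mod int p)"
    using cong_trans[OF cong_sym[OF fact_mult_cong_uminus[OF assms(1)]]] by blast
  then obtain l where l: "prime l" "l < p" "int l dvd qseq p c n"
    using small_prime_dvd_fact_mult_div_prime[OF assms(1,2)] unfolding qseq_eq_div by blast
  then show "\<exists>l. prime l \<and> l < p \<and> int l dvd qseq p c n"
    by blast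
  assume "qseq p c n \<ge> int p"
  with l(2) have "int l < qseq p c n"
    by linarith
  with l(1,3) show "composite_int (qseq p c n)"
    by (rule composite_if_proper_prime_dvd)
qed

end
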